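(* Assume the setting described in the context. Suppose that Assumption (A1) and Assumption (A2) hold. Then for every compact interval $I\subset(0,\infty)$ and every $r>0$, \[\lim_{n\rightarrow\infty}\sup_{x\in B_F(\rho,r)}\sup_{t\in I}\left|\beta(n)q^n_{\lfloor\gamma(n)t\rfloor}(g_n(x))-q_t(x)\right|=0. \qquad (\ast)\] Conversely, suppose that $V(G^n)\subseteq F$ for every $n$, that Assumption (A1) holds, and that $(\ast)$ holds for every compact interval $I\subset(0,\infty)$ and every $r>0$. Then Assumption (A2) holds.
   Context: Let $(E,d_E)$ be a metric space and $F\subseteq E$ such that $F\cap\overline{B}_E(x,r)$ is compact for all $x\in E$, $r>0$; here $\overline{B}_E(x,r)$, $B_E(x,r)$ are the closed and open balls of $(E,d_E)$. Let $d_F:=d_E|_{F\times F}$ and let $B_F(x,r)$ be the open ball in $(F,d_F)$. Fix $\rho\in F$, a Radon measure $\nu$ of full support on $(F,d_F)$ (regarded also as a Borel measure on $E$ via $\nu(A):=\nu(A\cap F)$), and a function $(q_t(x))_{x\in F,t>0}$, jointly continuous in $(t,x)$, with $q_t\geq 0$ and $\int_F q_t\,d\nu=1$ for each $t>0$. For a locally finite connected graph $G$ with at least two vertices, vertex set $V(G)$, edge set $E(G)$ and distinguished vertex $\rho(G)$: $d_G$ is the shortest-path metric and $B_G(x,r)$ the open $d_G$-ball; $\mu^G:V(G)^2\to[0,\infty)$ is a symmetric weight with $\mu^G_{xy}>0$ iff $\{x,y\}\in E(G)$; $\mu^G_x:=\sum_y\mu^G_{xy}$; $\nu^G(A):=\sum_{x\in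 A}\mu^G_x$. The discrete time simple random walk $X^G=(X^G_m)_{m\ge0}$ is the Markov chain with transition probabilities $P_G(x,y)=\mu^G_{xy}/\mu^G_x$, with law $\mathbf{P}^G_x$ when started at $x$. Set $p^G_m(x,y):=\mathbf{P}^G_x(X^G_m=y)/\nu^G(\{y\})$, $q^G_m(x,y):=\frac12(p^G_m(x,y)+p^G_{m+1}(x,y))$ and $q^G_m(x):=q^G_m(\rho(G),x)$. Let $(G^n)_{n\ge1}$ be locally finite connected graphs with $\#V(G^n)\ge2$, $V(G^n)\subseteq E$, $\rho(G^n)=\rho$; write $\nu^n,X^n,q^n,\mathbf{P}^{G^n}$ for $\nu^{G^n},X^{G^n},q^{G^n}$, etc. Let $(\alpha(n)),(\beta(n)),(\gamma(n))$ be non-negative sequences diverging to $\infty$. For $x\in E$, $g_n(x)$ denotes a point of $V(G^n)$ minimising $d_E(x,y)$ over $y\in V(G^n)$ (such a point exists under (A1)). Assumption (A1): (a) there is $c_1>0$ with $d_{G^n}(x,y)\ge c_1\alpha(n)d_E(x,y)$ for all $x,y\in V(G^n)$, $n\ge1$; and there is a non-negative sequence $\tilde\alpha(n)=o(\alpha(n))$ such that for each $r>0$ there exist $c_2<\infty$ and $n_0$ with $d_{G^n}(x,y)\le c_2\alpha(n)d_E(x,y)+\tilde\alpha(n)$ for all $x,y\in V(G^n)\cap B_E(\rho,r)$, $n\ge n_0$. (b) For each $r>0$, $\lim_{n}\sup_{x\in B_F(\rho,r)}d_E(x,V(G^n))=0$. (c) For every $x\in F$, $r>0$, $\lim_n\beta(n)^{-1}\nu^n(B_E(x,r))=\nu(B_E(x,r))$.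 (d) For every compact interval $I\subset(0,\infty)$, $x\in F$, $r>0$, $\lim_n\mathbf{P}^{G^n}_\rho(X^n_{\lfloor\gamma(n)t\rfloor}\in B_E(x,r))=\int_{B_F(x,r)}q_t(y)\nu(dy)$ uniformly for $t\in I$. Assumption (A2): for every compact interval $I\subset(0,\infty)$ and $r>0$, \[\lim_{\delta\to0}\limsup_{n\to\infty}\sup_{\substack{x,y\in B_{G^n}(\rho,\alpha(n)r):\\ d_{G^n}(x,y)\le\alpha(n)\delta}}\sup_{t\in I}\beta(n)\left|q^n_{\lfloor\gamma(n)t\rfloor}(x)-q^n_{\lfloor\gamma(n)t\rfloor}(y)\right|=0.\] *)

theory Defs
  imports "HOL-Probability.Probability" "HOL-Library.Landau_Symbols"
begin

text \<open>A graph G is given by its vertex set V and its symmetric weight mu;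
  the edges are exactly the pairs with positive weight.\<close>

definition adj :: "('a \<Rightarrow> 'a \<Rightarrow> real) \<Rightarrow> 'a \<Rightarrow> 'a \<Rightarrow> bool" where
  "adj mu x y \<longleftrightarrow> 0 < mu x y"

definition wgraph :: "'a set \<Rightarrow> ('a \<Rightarrow> 'a \<Rightarrow> real) \<Rightarrow> bool" where
  "wgraph V mu \<longleftrightarrow>
     (\<forall>x y. mu x y = mu y x) \<and> (\<forall>x y. 0 \<le> mu x y) \<and>
     (\<forall>x y. 0 < mu x y \<longrightarrow> x \<in> V \<and> y \<in> V \<and> x \<noteq> y) \<and>
     (\<forall>x\<in>V. finite {y. 0 < mu x y}) \<and>
     (\<forall>x\<in>V. \<forall>y\<in>V. \<exists>k. (adj mu ^^ k) x y) \<and>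
     (\<exists>x\<in>V. \<exists>y\<in>V. x \<noteq> y)"

definition gdist :: "('a \<Rightarrow> 'a \<Rightarrow> real) \<Rightarrow> 'a \<Rightarrow> 'a \<Rightarrow> real" where
  "gdist mu x y = real (LEAST k. (adj mu ^^ k) x y)"

definition wdeg :: "('a \<Rightarrow> 'a \<Rightarrow> real) \<Rightarrow> 'a \<Rightarrow> real" where
  "wdeg mu x = (\<Sum>y\<in>{y. 0 < mu x y}. mu x y)"

definition gmeasure :: "('a \<Rightarrow> 'a \<Rightarrow> real) \<Rightarrow> 'a set \<Rightarrow> 'a set \<Rightarrow> ennreal" where
  "gmeasure mu V A = (\<integral>\<^sup>+ x. indicator (A \<inter> V) x * ennreal (wdeg mu x) \<partial>count_space UNIV)"

text \<open>walk_prob mu m x A = P_x(X_m in A) for the simple random walk with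
  transition probabilities mu_xy / mu_x.\<close>
fun walk_prob :: "('a \<Rightarrow> 'a \<Rightarrow> real) \<Rightarrow> nat \<Rightarrow> 'a \<Rightarrow> 'a set \<Rightarrow> real" where
  "walk_prob mu 0 x A = indicator A x"
| "walk_prob mu (Suc m) x A =
     (\<Sum>z\<in>{z. 0 < mu x z}. mu x z / wdeg mu x * walk_prob mu m z A)"

definition pG :: "('a \<Rightarrow> 'a \<Rightarrow> real) \<Rightarrow> nat \<Rightarrow> 'a \<Rightarrow> 'a \<Rightarrow> real" where
  "pG mu m x y = walk_prob mu m x {y} / wdeg mu y"

definition qG :: "('a \<Rightarrow> 'a \<Rightarrow> real) \<Rightarrow> nat \<Rightarrow> 'a \<Rightarrow> 'a \<Rightarrow> real" where
  "qG mu m x y = (pG mu m x y + pG mu (Suc m) x y) / 2"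

section \<open>Radon measure on F, regarded as a Borel measure on E\<close>

definition radon_on :: "'a::metric_space set \<Rightarrow> 'a measure \<Rightarrow> bool" where
  "radon_on F nu \<longleftrightarrow> sets nu = sets borel \<and> emeasure nu (UNIV - F) = 0 \<and>
     (\<forall>x\<in>F. \<exists>r>0. emeasure nu (ball x r) < \<infinity>) \<and>
     (\<forall>A\<in>sets borel. emeasure nu A =
         (SUP K\<in>{K. compact K \<and> K \<subseteq> A \<inter> F}. emeasure nu K))"

definition assmA1 ::
  "'a::metric_space set \<Rightarrow> 'a measure \<Rightarrow> (real \<Rightarrow> 'a \<Rightarrow> real) \<Rightarrow> 'a \<Rightarrow>
   (nat \<Rightarrow> 'a set) \<Rightarrow> (nat \<Rightarrow> 'a \<Rightarrow> 'a \<Rightarrow> real) \<Rightarrow>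
   (nat \<Rightarrow> real) \<Rightarrow> (nat \<Rightarrow> real) \<Rightarrow> (nat \<Rightarrow> real) \<Rightarrow> bool" where
  "assmA1 F nu q rho V mu \<alpha> \<beta> \<gamma> \<longleftrightarrow>
   (\<exists>c1>0. \<forall>n. \<forall>x\<in>V n. \<forall>y\<in>V n. gdist (mu n) x y \<ge> c1 * \<alpha> n * dist x y) \<and>
   (\<exists>\<alpha>t. (\<forall>n. 0 \<le> \<alpha>t n) \<and> \<alpha>t \<in> o(\<alpha>) \<and>
      (\<forall>r>0. \<exists>c2 n0. \<forall>n\<ge>n0. \<forall>x\<in>V n \<inter> ball rho r. \<forall>y\<in>V n \<inter> ball rho r.
          gdist (mu n) x y \<le> c2 * \<alpha> n * dist x y + \<alpha>t n)) \<and>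
   (\<forall>r>0. \<forall>\<epsilon>>0. eventually (\<lambda>n. \<forall>x\<in>ball rho r \<inter> F. infdist x (V n) \<le> \<epsilon>) sequentially) \<and>
   (\<forall>x\<in>F. \<forall>r>0. (\<lambda>n. gmeasure (mu n) (V n) (ball x r) / ennreal (\<beta> n))
        \<longlonglongrightarrow> emeasure nu (ball x r)) \<and>
   (\<forall>a b. 0 < a \<longrightarrow> a \<le> b \<longrightarrow> (\<forall>x\<in>F. \<forall>r>0. \<forall>\<epsilon>>0. eventually (\<lambda>n.
        \<forall>t\<in>{a..b}. \<bar>walk_prob (mu n) (nat \<lfloor>\<gamma> n * t\<rfloor>) rho (ball x r)
                      - (LINT y:ball x r \<inter> F|nu. q t y)\<bar> \<le> \<epsilon>) sequentially))"

definition assmA2 ::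
  "'a \<Rightarrow> (nat \<Rightarrow> 'a set) \<Rightarrow> (nat \<Rightarrow> 'a \<Rightarrow> 'a \<Rightarrow> real) \<Rightarrow>
   (nat \<Rightarrow> real) \<Rightarrow> (nat \<Rightarrow> real) \<Rightarrow> (nat \<Rightarrow> real) \<Rightarrow> bool" where
  "assmA2 rho V mu \<alpha> \<beta> \<gamma> \<longleftrightarrow>
   (\<forall>a b r. 0 < a \<longrightarrow> a \<le> b \<longrightarrow> 0 < r \<longrightarrow> (\<forall>\<epsilon>>0. \<exists>\<delta>>0. eventually (\<lambda>n.
      \<forall>x\<in>V n. \<forall>y\<in>V n. gdist (mu n) rho x < \<alpha> n * r \<longrightarrow> gdist (mu n) rho y < \<alpha> n * r \<longrightarrow>
        gdist (mu n) x y \<le> \<alpha> n * \<delta> \<longrightarrow>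
        (\<forall>t\<in>{a..b}. \<beta> n * \<bar>qG (mu n) (nat \<lfloor>\<gamma> n * t\<rfloor>) rho x
                             - qG (mu n) (nat \<lfloor>\<gamma> n * t\<rfloor>) rho y\<bar> \<le> \<epsilon>)) sequentially))"

definition local_limit ::
  "'a::metric_space set \<Rightarrow> (real \<Rightarrow> 'a \<Rightarrow> real) \<Rightarrow> 'a \<Rightarrow> (nat \<Rightarrow> 'a \<Rightarrow> 'a \<Rightarrow> real) \<Rightarrow>
   (nat \<Rightarrow> real) \<Rightarrow> (nat \<Rightarrow> real) \<Rightarrow> (nat \<Rightarrow> 'a \<Rightarrow> 'a) \<Rightarrow> bool" where
  "local_limit F q rho mu \<beta> \<gamma> g \<longleftrightarrow>
   (\<forall>a b r. 0 < a \<longrightarrow> a \<le> b \<longrightarrow> 0 < r \<longrightarrow> (\<forall>\<epsilon>>0. eventually (\<lambda>n.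
      \<forall>x\<in>ball rho r \<inter> F. \<forall>t\<in>{a..b}.
         \<bar>\<beta> n * qG (mu n) (nat \<lfloor>\<gamma> n * t\<rfloor>) rho (g n x) - q t x\<bar> \<le> \<epsilon>) sequentially))"

end

theory Submission
  imports Defs
begin

text \<open>The pivot is equicontinuity of the rescaled kernels \<beta>(n) q^n with respect to the
  metric of E rather than the graph metric; by the comparison (A1a) of the two metrics this
  is equivalent to (A2).

  For the local limit, fix x and t and a small ball B around a point of a finite net near x.
  Equicontinuity makes \<beta>(n) q^n(g_n x) close to the \<nu>^n-weighted average of \<beta>(n) q^n over B.
  Since q^n times \<nu>^n is the averaged law of X_m and X_{m+1}, this average is the mass that
  the walk puts on B at times m and m + 1, divided by \<nu>^n(B)/\<beta>(n). By (A1c) and (A1d) these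
  converge to \<nu>(B) and to the integral of q_t over B, and continuity of q makes the latter
  close to q_t(x) \<nu>(B). Conversely, g_n is the identity on V(G^n) \<subseteq> F, so the local limit
  and uniform continuity of q on compact sets give equicontinuity directly.\<close>

section \<open>Random walks on weighted graphs\<close>

lemma wgraph_edge_in_V:
  assumes "wgraph V mu" "0 < mu x y"
  shows "x \<in> V" "y \<in> V"
  using assms unfolding wgraph_def by blast+

lemma wgraph_finite_neighbours:
  assumes "wgraph V mu" "x \<in> V"
  shows "finite {y. 0 < mu x y}"
  using assms unfolding wgraph_def by blast

lemma wdeg_nonneg: "0 \<le> wdeg mu x"
  unfolding wdeg_def by (rule sum_nonneg) simp

lemma wdeg_pos:
  assumes g: "wgraph V mu" and x: "x \<in> V"
  shows "0 < wdeg mu x"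
proof -
  from g x obtain w where w: "w \<in> V" "w \<noteq> x" unfolding wgraph_def by metis
  from g x w obtain k where k: "(adj mu ^^ k) x w" unfolding wgraph_def by blast
  then obtain k' where "k = Suc k'" using w by (cases k) auto
  with k obtain z where "adj mu x z" by (metis relpowp_Suc_E2)
  hence mz: "0 < mu x z" by (simp add: adj_def)
  have "mu x z \<le> wdeg mu x" unfolding wdeg_def
    by (rule member_le_sum) (use mz wgraph_finite_neighbours[OF g x] in auto)
  with mz show ?thesis by simp
qed

lemma reachable_within_finite:
  assumes g: "wgraph V mu" and x: "x \<in> V"
  shows "finite {y. \<exists>k\<le>N. (adj mu ^^ k) x y} \<and> {y. \<exists>k\<le>N. (adj mu ^^ k) x y} \<subseteq> V"
proof (induction N)
  case 0
  then show ?case using x by auto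
next
  case (Suc N)
  let ?S = "{y. \<exists>k\<le>N. (adj mu ^^ k) x y}"
  let ?T = "?S \<union> (\<Union>z\<in>?S. {y. 0 < mu z y})"
  have "{y. \<exists>k\<le>Suc N. (adj mu ^^ k) x y} \<subseteq> ?T"
  proof
    fix y assume "y \<in> {y. \<exists>k\<le>Suc N. (adj mu ^^ k) x y}"
    then obtain k where k: "k \<le> Suc N" "(adj mu ^^ k) x y" by auto
    show "y \<in> ?T"
    proof (cases "k \<le> N")
      case False
      with k obtain z where "(adj mu ^^ N) x z" "adj mu z y"
        by (metis le_Suc_eq relpowp_Suc_E)
      thus ?thesis by (auto simp: adj_def)
    qed (use k in auto)
  qed
  moreover have "finite ?T" using Suc.IH wgraph_finite_neighbours[OF g] by auto
  moreover have "?T \<subseteq> V" using Suc.IH wgraph_edge_in_V[OF g] by blast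
  ultimately show ?case by (meson finite_subset subset_trans)
qed

lemma gdist_ball_finite:
  assumes g: "wgraph V mu" and x: "x \<in> V"
  shows "finite {y\<in>V. gdist mu x y \<le> c}"
proof -
  have "{y\<in>V. gdist mu x y \<le> c} \<subseteq> {y. \<exists>k\<le>nat \<lceil>c\<rceil>. (adj mu ^^ k) x y}"
  proof
    fix y assume y: "y \<in> {y\<in>V. gdist mu x y \<le> c}"
    from g x y obtain k where "(adj mu ^^ k) x y" unfolding wgraph_def by blast
    hence "(adj mu ^^ (LEAST k. (adj mu ^^ k) x y)) x y" by (rule LeastI)
    moreover have "(LEAST k. (adj mu ^^ k) x y) \<le> nat \<lceil>c\<rceil>"
      using y by (simp add: gdist_def) linarith
    ultimately show "y \<in> {y. \<exists>k\<le>nat \<lceil>c\<rceil>. (adj mu ^^ k) x y}" by blast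
  qed
  thus ?thesis using reachable_within_finite[OF g x] finite_subset by blast
qed

lemma walk_prob_eq_sum:
  assumes g: "wgraph V mu" and fin: "finite (A \<inter> V)" and x: "x \<in> V"
  shows "walk_prob mu m x A = (\<Sum>y\<in>A \<inter> V. walk_prob mu m x {y})"
  using x
proof (induction m arbitrary: x)
  case 0
  have "(\<Sum>y\<in>A \<inter> V. walk_prob mu 0 x {y}) = (\<Sum>y\<in>A \<inter> V. if y = x then 1 else 0)"
    by (rule sum.cong) (auto simp: indicator_def)
  also have "\<dots> = indicator A x" using fin 0 by (simp add: sum.delta indicator_def)
  finally show ?case by simp
next
  case (Suc m)
  let ?N = "{z. 0 < mu x z}"
  have "walk_prob mu (Suc m) x A
      = (\<Sum>z\<in>?N. mu x z / wdeg mu x * (\<Sum>y\<in>A \<inter> V. walk_prob mu m z {y}))"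
    by (simp, rule sum.cong) (use Suc.IH wgraph_edge_in_V[OF g] in auto)
  also have "\<dots> = (\<Sum>y\<in>A \<inter> V. \<Sum>z\<in>?N. mu x z / wdeg mu x * walk_prob mu m z {y})"
    by (simp only: sum_distrib_left) (rule sum.swap)
  also have "\<dots> = (\<Sum>y\<in>A \<inter> V. walk_prob mu (Suc m) x {y})" by simp
  finally show ?case .
qed

lemma sum_qG_wdeg:
  assumes g: "wgraph V mu" and fin: "finite (A \<inter> V)" and x: "x \<in> V"
  shows "(\<Sum>y\<in>A \<inter> V. qG mu m x y * wdeg mu y)
       = (walk_prob mu m x A + walk_prob mu (Suc m) x A) / 2"
proof -
  have "(\<Sum>y\<in>A \<inter> V. qG mu m x y * wdeg mu y)
      = (\<Sum>y\<in>A \<inter> V. (walk_prob mu m x {y} + walk_prob mu (Suc m) x {y}) / 2)"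
  proof (rule sum.cong)
    fix y assume "y \<in> A \<inter> V"
    hence "wdeg mu y \<noteq> 0" using wdeg_pos[OF g] by force
    thus "qG mu m x y * wdeg mu y = (walk_prob mu m x {y} + walk_prob mu (Suc m) x {y}) / 2"
      by (simp add: qG_def pG_def field_simps)
  qed simp
  also have "\<dots> = (walk_prob mu m x A + walk_prob mu (Suc m) x A) / 2"
    by (simp only: sum_divide_distrib[symmetric] sum.distrib walk_prob_eq_sum[OF g fin x])
  finally show ?thesis .
qed

lemma gmeasure_eq_sum:
  assumes "finite (A \<inter> V)"
  shows "gmeasure mu V A = ennreal (\<Sum>y\<in>A \<inter> V. wdeg mu y)"
proof -
  have "gmeasure mu V A = (\<integral>\<^sup>+ x. ennreal (wdeg mu x) * indicator (A \<inter> V) x \<partial>count_space UNIV)"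
    unfolding gmeasure_def by (simp add: mult.commute)
  also have "\<dots> = (\<Sum>y\<in>A \<inter> V. ennreal (wdeg mu y))"
    using nn_integral_indicator_finite[OF assms] by simp
  also have "\<dots> = ennreal (\<Sum>y\<in>A \<inter> V. wdeg mu y)" by (simp add: sum_ennreal wdeg_nonneg)
  finally show ?thesis .
qed

section \<open>Measure and continuity on proper subsets of a metric space\<close>

lemma borel_if_compact_cballs:
  fixes F :: "'a::metric_space set"
  assumes compact: "\<And>x r. 0 < r \<Longrightarrow> compact (F \<inter> cball x r)"
  shows "F \<in> sets borel"
proof -
  have "F = (\<Union>k::nat. F \<inter> cball x0 (real k + 1))" for x0
  proof (intro equalityI subsetI)
    fix x assume "x \<in> F"
    obtain k :: nat where "dist x0 x \<le> real k" using real_arch_simple by blast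
    hence "x \<in> F \<inter> cball x0 (real k + 1)" using \<open>x \<in> F\<close> by simp
    thus "x \<in> (\<Union>k::nat. F \<inter> cball x0 (real k + 1))" by blast
  qed auto
  moreover have "(\<Union>k::nat. F \<inter> cball x0 (real k + 1)) \<in> sets borel" for x0
    by (intro sets.countable_UN image_subsetI borel_closed compact_imp_closed compact) simp
  ultimately show ?thesis by metis
qed

lemma radon_on_sets: "radon_on F nu \<Longrightarrow> sets nu = sets borel"
  by (simp add: radon_on_def)

lemma radon_on_emeasure_Int:
  fixes F :: "'a::metric_space set"
  assumes R: "radon_on F nu" and F: "F \<in> sets borel" and A: "A \<in> sets borel"
  shows "emeasure nu (A \<inter> F) = emeasure nu A"
proof -
  have "UNIV - F \<in> null_sets nu"
    using R F by (auto simp: radon_on_def null_sets_def)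
  from emeasure_Diff_null_set[OF this] A R have "emeasure nu (A - (UNIV - F)) = emeasure nu A"
    by (simp add: radon_on_sets)
  moreover have "A - (UNIV - F) = A \<inter> F" by blast
  ultimately show ?thesis by simp
qed

text \<open>Local finiteness of a Radon measure becomes finiteness on all balls, since F meets
  every ball in a relatively compact set.\<close>

lemma radon_on_emeasure_ball_finite:
  fixes F :: "'a::metric_space set"
  assumes R: "radon_on F nu" and compact: "\<And>x r. 0 < r \<Longrightarrow> compact (F \<inter> cball x r)"
    and d: "0 < d"
  shows "emeasure nu (ball z d) < \<infinity>"
proof -
  have F: "F \<in> sets borel" by (rule borel_if_compact_cballs[OF compact])
  obtain rr where rr: "\<And>x. x \<in> F \<Longrightarrow> rr x > 0 \<and> emeasure nu (ball x (rr x)) < \<infinity>"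
    using R unfolding radon_on_def by metis
  let ?C = "F \<inter> cball z d"
  have "?C \<subseteq> (\<Union>x\<in>?C. ball x (rr x))" using rr by force
  then obtain C' where C': "C' \<subseteq> ?C" "finite C'" "?C \<subseteq> (\<Union>x\<in>C'. ball x (rr x))"
    using compactE_image[of ?C ?C "\<lambda>x. ball x (rr x)"] compact[OF d] by blast
  have "emeasure nu (ball z d) = emeasure nu (ball z d \<inter> F)"
    using radon_on_emeasure_Int[OF R F, of "ball z d"] by simp
  also have "\<dots> \<le> emeasure nu (\<Union>x\<in>C'. ball x (rr x))"
    by (rule emeasure_mono) (use C' R in \<open>auto simp: radon_on_sets\<close>)
  also have "\<dots> \<le> (\<Sum>x\<in>C'. emeasure nu (ball x (rr x)))"
    by (rule emeasure_subadditive_finite) (use C' R in \<open>auto simp: radon_on_sets\<close>)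
  also have "\<dots> < \<infinity>" using C' rr by (auto simp: sum_Pinfty less_top)
  finally show ?thesis .
qed

lemma radon_on_ball_Int:
  fixes F :: "'a::metric_space set"
  assumes R: "radon_on F nu" and compact: "\<And>x r. 0 < r \<Longrightarrow> compact (F \<inter> cball x r)"
    and d: "0 < d"
  shows "ball z d \<inter> F \<in> sets nu" "emeasure nu (ball z d \<inter> F) < \<infinity>"
    and "measure nu (ball z d \<inter> F) = measure nu (ball z d)"
proof -
  have F: "F \<in> sets borel" by (rule borel_if_compact_cballs[OF compact])
  show "ball z d \<inter> F \<in> sets nu" using F by (simp add: radon_on_sets[OF R])
  have "emeasure nu (ball z d \<inter> F) = emeasure nu (ball z d)"
    by (rule radon_on_emeasure_Int[OF R F]) simp
  thus "emeasure nu (ball z d \<inter> F) < \<infinity>" "measure nu (ball z d \<inter> F) = measure nu (ball z d)"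
    using radon_on_emeasure_ball_finite[OF R compact d] by (simp_all add: measure_def)
qed

lemma set_integral_dist_le:
  fixes f g :: "'a \<Rightarrow> real"
  assumes f: "set_integrable M A f" and g: "set_integrable M A g"
    and A: "A \<in> sets M" "emeasure M A \<noteq> \<infinity>"
    and le: "\<And>x. x \<in> A \<Longrightarrow> \<bar>f x - g x\<bar> \<le> e"
  shows "\<bar>(LINT x:A|M. f x) - (LINT x:A|M. g x)\<bar> \<le> e * measure M A"
proof -
  have c: "set_integrable M A (\<lambda>_. e)" using A by (simp add: set_integrable_def less_top)
  have "(LINT x:A|M. f x - g x) \<le> (LINT x:A|M. e)" "(LINT x:A|M. g x - f x) \<le> (LINT x:A|M. e)"
    by (rule set_integral_mono; use f g c le in \<open>auto simp: abs_le_iff\<close>)+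
  thus ?thesis
    using set_integral_const[OF A, of e] set_integral_diff(2)[OF f g] set_integral_diff(2)[OF g f]
    by (simp add: abs_le_iff mult.commute)
qed

lemma compact_finite_net:
  fixes K :: "'a::metric_space set"
  assumes "compact K" "0 < d"
  obtains Z where "finite Z" "Z \<subseteq> K" "\<And>x. x \<in> K \<Longrightarrow> \<exists>z\<in>Z. dist x z < d"
proof -
  have "K \<subseteq> (\<Union>x\<in>K. ball x d)" using assms by auto
  then obtain Z where "Z \<subseteq> K" "finite Z" "K \<subseteq> (\<Union>x\<in>Z. ball x d)"
    using compactE_image[OF assms(1), of K "\<lambda>x. ball x d"] by blast
  thus ?thesis using that by (force simp: dist_commute)
qed

lemma uniformly_continuous_on_strip:
  fixes q :: "real \<Rightarrow> 'a::metric_space \<Rightarrow> real"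
  assumes q: "continuous_on ({0<..} \<times> F) (\<lambda>(t, x). q t x)" and a: "0 < a"
    and K: "compact K" "K \<subseteq> F" and e: "0 < e"
  obtains \<eta> where "0 < \<eta>" "\<And>s s' y y'. s \<in> {a..b} \<Longrightarrow> s' \<in> {a..b} \<Longrightarrow> y \<in> K \<Longrightarrow> y' \<in> K \<Longrightarrow>
      \<bar>s - s'\<bar> < \<eta> \<Longrightarrow> dist y y' < \<eta> \<Longrightarrow> \<bar>q s y - q s' y'\<bar> < e"
proof -
  have "continuous_on ({a..b} \<times> K) (\<lambda>(t, x). q t x)"
    by (rule continuous_on_subset[OF q]) (use a K in auto)
  hence "uniformly_continuous_on ({a..b} \<times> K) (\<lambda>(t, x). q t x)"
    by (intro compact_uniformly_continuous compact_Times compact_Icc K)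
  then obtain d where d: "0 < d" and
    H: "\<And>u u'. u \<in> {a..b} \<times> K \<Longrightarrow> u' \<in> {a..b} \<times> K \<Longrightarrow> dist u' u < d \<Longrightarrow>
         dist ((\<lambda>(t, x). q t x) u') ((\<lambda>(t, x). q t x) u) < e"
    unfolding uniformly_continuous_on_def using e by metis
  show ?thesis
  proof (rule that[of "d / 2"])
    fix s s' y y' assume st: "s \<in> {a..b}" "s' \<in> {a..b}" "y \<in> K" "y' \<in> K"
      "\<bar>s - s'\<bar> < d / 2" "dist y y' < d / 2"
    have "dist (s, y) (s', y') \<le> dist s s' + dist y y'"
      unfolding dist_Pair_Pair by (rule sqrt_sum_squares_le_sum) auto
    also have "\<dots> < d" using st by (simp add: dist_real_def)
    finally show "\<bar>q s y - q s' y'\<bar> < e"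
      using H[of "(s', y')" "(s, y)"] st by (simp add: dist_real_def dist_commute)
  qed (use d in simp)
qed

lemma bounded_on_strip:
  fixes q :: "real \<Rightarrow> 'a::metric_space \<Rightarrow> real"
  assumes q: "continuous_on ({0<..} \<times> F) (\<lambda>(t, x). q t x)" and a: "0 < a"
    and K: "compact K" "K \<subseteq> F"
  obtains M where "0 \<le> M" "\<And>s y. s \<in> {a..b} \<Longrightarrow> y \<in> K \<Longrightarrow> \<bar>q s y\<bar> \<le> M"
proof -
  have "continuous_on ({a..b} \<times> K) (\<lambda>(t, x). q t x)"
    by (rule continuous_on_subset[OF q]) (use a K in auto)
  hence "compact ((\<lambda>(t, x). q t x) ` ({a..b} \<times> K))"
    by (intro compact_continuous_image compact_Times compact_Icc K)
  then obtain M where "\<And>u. u \<in> (\<lambda>(t, x). q t x) ` ({a..b} \<times> K) \<Longrightarrow> norm u \<le> M"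
    using compact_imp_bounded bounded_iff by metis
  thus ?thesis using that[of "max M 0"] by force
qed

lemma dist_le_infdist_if_nearest:
  assumes "p \<in> V" "\<forall>y\<in>V. dist x p \<le> dist x y"
  shows "dist x p \<le> infdist x V"
  using assms unfolding infdist_def by (auto intro!: cINF_greatest)

lemma nat_floor_add_inverse:
  fixes c t :: real
  assumes "0 < c" "0 \<le> t"
  shows "nat \<lfloor>c * (t + 1 / c)\<rfloor> = Suc (nat \<lfloor>c * t\<rfloor>)"
proof -
  have "c * (t + 1 / c) = c * t + 1" using assms by (simp add: field_simps)
  moreover have "0 \<le> \<lfloor>c * t\<rfloor>" using assms by simp
  ultimately show ?thesis by (simp add: nat_add_distrib)
qed

lemma weighted_sum_deviation_le:
  fixes f w :: "'b \<Rightarrow> real"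
  assumes A: "finite A" and \<beta>: "0 < \<beta>" and w: "\<And>y. y \<in> A \<Longrightarrow> 0 \<le> w y"
    and le: "\<And>y. y \<in> A \<Longrightarrow> \<bar>Q - \<beta> * f y\<bar> \<le> c"
  shows "\<bar>Q * ((\<Sum>y\<in>A. w y) / \<beta>) - (\<Sum>y\<in>A. f y * w y)\<bar> \<le> c * ((\<Sum>y\<in>A. w y) / \<beta>)"
proof -
  have "Q * ((\<Sum>y\<in>A. w y) / \<beta>) - (\<Sum>y\<in>A. f y * w y) = (\<Sum>y\<in>A. (Q - \<beta> * f y) * w y) / \<beta>"
    using \<beta> by (simp add: sum_distrib_left sum_subtractf field_simps sum_divide_distrib)
  moreover have "\<bar>\<Sum>y\<in>A. (Q - \<beta> * f y) * w y\<bar> \<le> (\<Sum>y\<in>A. c * w y)"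
    by (rule order_trans[OF sum_abs sum_mono]) (use w le in \<open>auto simp: abs_mult intro: mult_right_mono\<close>)
  ultimately show ?thesis
    using \<beta> by (simp add: sum_distrib_left divide_right_mono)
qed

lemma abs_midpoint_diff_le:
  fixes p p' i i' c e :: real
  assumes "\<bar>p - i\<bar> \<le> e" "\<bar>p' - i'\<bar> \<le> e" "\<bar>i' - i\<bar> \<le> 2 * e" "\<bar>i - c\<bar> \<le> 2 * e"
  shows "\<bar>(p + p') / 2 - c\<bar> \<le> 4 * e"
  using assms by (simp add: abs_le_iff field_simps)

lemma abs_diff_le_if_weighted_approx:
  fixes Q W P v c \<epsilon> :: real
  assumes v: "0 < v" and \<epsilon>: "0 < \<epsilon>" and W: "v / 2 \<le> W"
    and QP: "\<bar>Q * W - P\<bar> \<le> \<epsilon> / 4 * W"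
    and Pc: "\<bar>P - c * v\<bar> \<le> \<epsilon> / 4 * v"
    and Wv: "\<bar>c\<bar> * \<bar>W - v\<bar> \<le> \<epsilon> / 16 * v"
  shows "\<bar>Q - c\<bar> \<le> \<epsilon>"
proof -
  have W0: "0 < W" using v W by simp
  have "\<bar>c * v - c * W\<bar> = \<bar>c\<bar> * \<bar>W - v\<bar>"
    by (simp add: abs_mult[symmetric] algebra_simps abs_minus_commute)
  hence "\<bar>Q * W - c * W\<bar> \<le> \<epsilon> / 4 * W + \<epsilon> / 4 * v + \<epsilon> / 16 * v" using QP Pc Wv by linarith
  also have "\<dots> \<le> \<epsilon> * W"
    using mult_left_mono[of "5 * v" "12 * W" \<epsilon>] W W0 \<epsilon> by (simp add: field_simps)
  also have "\<bar>Q * W - c * W\<bar> = \<bar>Q - c\<bar> * W"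
    by (simp only: left_diff_distrib[symmetric] abs_mult abs_of_pos[OF W0])
  finally show ?thesis using W0 by simp
qed

text \<open>B is a small ball, I and I' stand for the integrals of the limiting kernel over B at
  times t and t + 1/\<gamma>(n), v for the limiting mass of B and c for the limiting kernel near B.\<close>

lemma qG_ball_estimate:
  assumes g: "wgraph V mu" and rho: "rho \<in> V" and fin: "finite (B \<inter> V)" and \<beta>: "0 < \<beta>"
    and near: "\<And>y. y \<in> B \<inter> V \<Longrightarrow> \<beta> * \<bar>qG mu m rho u - qG mu m rho y\<bar> \<le> \<epsilon> / 4"
    and walk: "\<bar>walk_prob mu m rho B - I\<bar> \<le> \<epsilon> / 16 * v"
      "\<bar>walk_prob mu (Suc m) rho B - I'\<bar> \<le> \<epsilon> / 16 * v"
    and int: "\<bar>I' - I\<bar> \<le> \<epsilon> / 8 * v" "\<bar>I - c * v\<bar> \<le> \<epsilon> / 8 * v"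
    and weight: "\<bar>(\<Sum>y\<in>B \<inter> V. wdeg mu y) / \<beta> - v\<bar> \<le> e * v" and e: "e \<le> 1 / 2"
    and c: "\<bar>c\<bar> * e \<le> \<epsilon> / 16" and v: "0 < v" and \<epsilon>: "0 < \<epsilon>"
  shows "\<bar>\<beta> * qG mu m rho u - c\<bar> \<le> \<epsilon>"
proof -
  define W where "W = (\<Sum>y\<in>B \<inter> V. wdeg mu y) / \<beta>"
  define S where "S = (\<Sum>y\<in>B \<inter> V. qG mu m rho y * wdeg mu y)"
  have QS: "\<bar>\<beta> * qG mu m rho u * W - S\<bar> \<le> \<epsilon> / 4 * W"
    unfolding W_def S_def
  proof (rule weighted_sum_deviation_le[OF fin \<beta> wdeg_nonneg])
    fix y assume "y \<in> B \<inter> V"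
    thus "\<bar>\<beta> * qG mu m rho u - \<beta> * qG mu m rho y\<bar> \<le> \<epsilon> / 4"
      using near \<beta> by (simp add: abs_mult right_diff_distrib[symmetric])
  qed
  have "\<bar>I' - I\<bar> \<le> 2 * (\<epsilon> / 16 * v)" "\<bar>I - c * v\<bar> \<le> 2 * (\<epsilon> / 16 * v)"
    using int by simp_all
  from abs_midpoint_diff_le[OF walk this]
  have Sc: "\<bar>S - c * v\<bar> \<le> \<epsilon> / 4 * v" unfolding S_def sum_qG_wdeg[OF g fin rho] by simp
  have "e * v \<le> v / 2" using e v by simp
  hence W: "v / 2 \<le> W" using weight unfolding W_def by (simp add: abs_le_iff)
  have "\<bar>c\<bar> * \<bar>W - v\<bar> \<le> \<bar>c\<bar> * e * v"
    using mult_left_mono[OF weight[folded W_def], of "\<bar>c\<bar>"] by (simp add: mult.assoc)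
  also have "\<dots> \<le> \<epsilon> / 16 * v" using c v by (intro mult_right_mono) auto
  finally show ?thesis by (rule abs_diff_le_if_weighted_approx[OF v \<epsilon> W QS Sc])
qed

section \<open>Equicontinuity of the rescaled heat kernels\<close>

text \<open>Assumption (A2) with the graph distance replaced by the distance of E.\<close>

definition qG_equicontinuous ::
  "'a::metric_space \<Rightarrow> (nat \<Rightarrow> 'a set) \<Rightarrow> (nat \<Rightarrow> 'a \<Rightarrow> 'a \<Rightarrow> real) \<Rightarrow>
   (nat \<Rightarrow> real) \<Rightarrow> (nat \<Rightarrow> real) \<Rightarrow> bool" where
  "qG_equicontinuous rho V mu \<beta> \<gamma> \<longleftrightarrow>
   (\<forall>a b r. 0 < a \<longrightarrow> a \<le> b \<longrightarrow> 0 < r \<longrightarrow> (\<forall>\<epsilon>>0. \<exists>\<delta>>0. eventually (\<lambda>n.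
      \<forall>x\<in>V n \<inter> ball rho r. \<forall>y\<in>V n \<inter> ball rho r. dist x y \<le> \<delta> \<longrightarrow>
        (\<forall>t\<in>{a..b}. \<beta> n * \<bar>qG (mu n) (nat \<lfloor>\<gamma> n * t\<rfloor>) rho x
                             - qG (mu n) (nat \<lfloor>\<gamma> n * t\<rfloor>) rho y\<bar> \<le> \<epsilon>)) sequentially))"

lemma qG_equicontinuous_if_assmA2:
  assumes A2: "assmA2 rho V mu \<alpha> \<beta> \<gamma>" and rho_V: "\<And>n. rho \<in> V n"
    and \<alpha>_nonneg: "\<And>n. 0 \<le> \<alpha> n" and \<alpha>_lim: "filterlim \<alpha> at_top sequentially"
    and \<alpha>t: "\<alpha>t \<in> o(\<alpha>)"
    and upper: "\<And>r. 0 < r \<Longrightarrow> \<exists>c2 n0. \<forall>n\<ge>n0. \<forall>x\<in>V n \<inter> ball rho r. \<forall>y\<in>V n \<inter> ball rho r.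
                  gdist (mu n) x y \<le> c2 * \<alpha> n * dist x y + \<alpha>t n"
  shows "qG_equicontinuous rho V mu \<beta> \<gamma>"
  unfolding qG_equicontinuous_def
proof (intro allI impI)
  fix a b r \<epsilon> :: real assume a: "0 < a" and ab: "a \<le> b" and r: "0 < r" and \<epsilon>: "0 < \<epsilon>"
  obtain c2 n0 where c2: "\<And>n x y. n \<ge> n0 \<Longrightarrow> x \<in> V n \<inter> ball rho r \<Longrightarrow> y \<in> V n \<inter> ball rho r \<Longrightarrow>
      gdist (mu n) x y \<le> c2 * \<alpha> n * dist x y + \<alpha>t n"
    using upper[OF r] by blast
  define C where "C = \<bar>c2\<bar>"
  have C: "gdist (mu n) x y \<le> \<alpha> n * (C * d) + \<alpha>t n"
    if "n \<ge> n0" "x \<in> V n \<inter> ball rho r" "y \<in> V n \<inter> ball rho r" "dist x y \<le> d" for n x y d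
  proof -
    have "c2 * \<alpha> n * dist x y \<le> C * (\<alpha> n * dist x y)"
      unfolding C_def mult.assoc using \<alpha>_nonneg[of n] by (intro mult_right_mono) auto
    also have "\<dots> \<le> \<alpha> n * (C * d)"
      using mult_left_mono[OF that(4), of "\<bar>c2\<bar> * \<alpha> n"] \<alpha>_nonneg[of n]
      unfolding C_def by (simp add: algebra_simps)
    finally have "c2 * \<alpha> n * dist x y \<le> \<alpha> n * (C * d)" .
    thus ?thesis using c2[OF that(1-3)] by linarith
  qed
  define R where "R = C * r + 1"
  have R: "0 < R" using r by (simp add: R_def C_def add_nonneg_pos)
  obtain \<delta>2 where \<delta>2: "0 < \<delta>2" and ev_A2: "eventually (\<lambda>n.
      \<forall>x\<in>V n. \<forall>y\<in>V n. gdist (mu n) rho x < \<alpha> n * R \<longrightarrow> gdist (mu n) rho y < \<alpha> n * R \<longrightarrow>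
        gdist (mu n) x y \<le> \<alpha> n * \<delta>2 \<longrightarrow>
        (\<forall>t\<in>{a..b}. \<beta> n * \<bar>qG (mu n) (nat \<lfloor>\<gamma> n * t\<rfloor>) rho x
                             - qG (mu n) (nat \<lfloor>\<gamma> n * t\<rfloor>) rho y\<bar> \<le> \<epsilon>)) sequentially"
    using A2 a ab R \<epsilon> unfolding assmA2_def by blast
  define \<delta> where "\<delta> = \<delta>2 / (2 * C + 2)"
  have \<delta>: "0 < \<delta>" "C * \<delta> \<le> \<delta>2 / 2"
    using \<delta>2 by (auto simp: \<delta>_def C_def field_simps)
  have ev_\<alpha>: "eventually (\<lambda>n. 1 \<le> \<alpha> n) sequentially"
    using \<alpha>_lim unfolding filterlim_at_top by blast
  have ev_\<alpha>t: "eventually (\<lambda>n. \<alpha>t n \<le> c * \<alpha> n) sequentially" if "0 < c" for c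
    using landau_o.smallD[OF \<alpha>t that] by (rule eventually_mono) (use \<alpha>_nonneg in auto)
  have ev_\<alpha>t12: "eventually (\<lambda>n. \<alpha>t n \<le> 1/2 * \<alpha> n) sequentially"
    "eventually (\<lambda>n. \<alpha>t n \<le> \<delta>2/2 * \<alpha> n) sequentially"
    by (rule ev_\<alpha>t; use \<delta>2 in simp)+
  show "\<exists>\<delta>>0. eventually (\<lambda>n. \<forall>x\<in>V n \<inter> ball rho r. \<forall>y\<in>V n \<inter> ball rho r. dist x y \<le> \<delta> \<longrightarrow>
        (\<forall>t\<in>{a..b}. \<beta> n * \<bar>qG (mu n) (nat \<lfloor>\<gamma> n * t\<rfloor>) rho x
                             - qG (mu n) (nat \<lfloor>\<gamma> n * t\<rfloor>) rho y\<bar> \<le> \<epsilon>)) sequentially"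
  proof (rule exI[of _ \<delta>], intro conjI \<delta>(1), rule eventually_mono[OF eventually_conj[OF
        eventually_ge_at_top[of n0] eventually_conj[OF ev_A2 eventually_conj[OF ev_\<alpha>
        eventually_conj[OF ev_\<alpha>t12]]]]],
      elim conjE, intro ballI impI)
    fix n x y t assume n0: "n0 \<le> n" and H: "\<forall>x\<in>V n. \<forall>y\<in>V n.
        gdist (mu n) rho x < \<alpha> n * R \<longrightarrow> gdist (mu n) rho y < \<alpha> n * R \<longrightarrow>
        gdist (mu n) x y \<le> \<alpha> n * \<delta>2 \<longrightarrow>
        (\<forall>t\<in>{a..b}. \<beta> n * \<bar>qG (mu n) (nat \<lfloor>\<gamma> n * t\<rfloor>) rho x
                             - qG (mu n) (nat \<lfloor>\<gamma> n * t\<rfloor>) rho y\<bar> \<le> \<epsilon>)"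
      and \<alpha>1: "1 \<le> \<alpha> n" and \<alpha>t_le: "\<alpha>t n \<le> 1/2 * \<alpha> n" "\<alpha>t n \<le> \<delta>2/2 * \<alpha> n"
      and x: "x \<in> V n \<inter> ball rho r" and y: "y \<in> V n \<inter> ball rho r" and xy: "dist x y \<le> \<delta>"
      and t: "t \<in> {a..b}"
    have rho: "rho \<in> V n \<inter> ball rho r" using rho_V r by simp
    have "gdist (mu n) rho z < \<alpha> n * R" if "z \<in> V n \<inter> ball rho r" for z
      using C[OF n0 rho that, of r] \<alpha>t_le(1) \<alpha>1 that by (simp add: R_def algebra_simps)
    moreover have "gdist (mu n) x y \<le> \<alpha> n * \<delta>2"
    proof -
      have "\<alpha> n * (C * \<delta>) \<le> \<alpha> n * (\<delta>2 / 2)" using \<delta>(2) \<alpha>1 by (intro mult_left_mono) auto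
      thus ?thesis using C[OF n0 x y xy] \<alpha>t_le(2) by (simp add: algebra_simps)
    qed
    ultimately show "\<beta> n * \<bar>qG (mu n) (nat \<lfloor>\<gamma> n * t\<rfloor>) rho x
                            - qG (mu n) (nat \<lfloor>\<gamma> n * t\<rfloor>) rho y\<bar> \<le> \<epsilon>"
      using H x y t by blast
  qed
qed

lemma assmA2_if_qG_equicontinuous:
  assumes eq: "qG_equicontinuous rho V mu \<beta> \<gamma>" and rho_V: "\<And>n. rho \<in> V n"
    and \<alpha>_lim: "filterlim \<alpha> at_top sequentially" and c1: "0 < c1"
    and lower: "\<And>n x y. x \<in> V n \<Longrightarrow> y \<in> V n \<Longrightarrow> c1 * \<alpha> n * dist x y \<le> gdist (mu n) x y"
  shows "assmA2 rho V mu \<alpha> \<beta> \<gamma>"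
  unfolding assmA2_def
proof (intro allI impI)
  fix a b r \<epsilon> :: real assume a: "0 < a" and ab: "a \<le> b" and r: "0 < r" and \<epsilon>: "0 < \<epsilon>"
  obtain \<delta> where \<delta>: "0 < \<delta>" and ev_eq: "eventually (\<lambda>n.
      \<forall>x\<in>V n \<inter> ball rho (r / c1). \<forall>y\<in>V n \<inter> ball rho (r / c1). dist x y \<le> \<delta> \<longrightarrow>
        (\<forall>t\<in>{a..b}. \<beta> n * \<bar>qG (mu n) (nat \<lfloor>\<gamma> n * t\<rfloor>) rho x
                             - qG (mu n) (nat \<lfloor>\<gamma> n * t\<rfloor>) rho y\<bar> \<le> \<epsilon>)) sequentially"
    using eq a ab r c1 \<epsilon> unfolding qG_equicontinuous_def by (meson divide_pos_pos)
  have ev_\<alpha>: "eventually (\<lambda>n. 0 < \<alpha> n) sequentially"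
    using \<alpha>_lim unfolding filterlim_at_top_dense by blast
  have lower': "\<alpha> n * (c1 * dist x y) \<le> gdist (mu n) x y" if "x \<in> V n" "y \<in> V n" for n x y
    using lower[OF that] by (simp add: algebra_simps)
  show "\<exists>\<delta>>0. eventually (\<lambda>n. \<forall>x\<in>V n. \<forall>y\<in>V n.
      gdist (mu n) rho x < \<alpha> n * r \<longrightarrow> gdist (mu n) rho y < \<alpha> n * r \<longrightarrow>
      gdist (mu n) x y \<le> \<alpha> n * \<delta> \<longrightarrow>
      (\<forall>t\<in>{a..b}. \<beta> n * \<bar>qG (mu n) (nat \<lfloor>\<gamma> n * t\<rfloor>) rho x
                           - qG (mu n) (nat \<lfloor>\<gamma> n * t\<rfloor>) rho y\<bar> \<le> \<epsilon>)) sequentially"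
  proof (rule exI[of _ "c1 * \<delta>"], intro conjI mult_pos_pos c1 \<delta>,
      rule eventually_mono[OF eventually_conj[OF ev_eq ev_\<alpha>]], elim conjE, intro ballI impI)
    fix n x y t assume H: "\<forall>x\<in>V n \<inter> ball rho (r / c1). \<forall>y\<in>V n \<inter> ball rho (r / c1).
        dist x y \<le> \<delta> \<longrightarrow> (\<forall>t\<in>{a..b}. \<beta> n * \<bar>qG (mu n) (nat \<lfloor>\<gamma> n * t\<rfloor>) rho x
                             - qG (mu n) (nat \<lfloor>\<gamma> n * t\<rfloor>) rho y\<bar> \<le> \<epsilon>)"
      and \<alpha>: "0 < \<alpha> n" and x: "x \<in> V n" and y: "y \<in> V n"
      and hx: "gdist (mu n) rho x < \<alpha> n * r" and hy: "gdist (mu n) rho y < \<alpha> n * r"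
      and hxy: "gdist (mu n) x y \<le> \<alpha> n * (c1 * \<delta>)" and t: "t \<in> {a..b}"
    have "z \<in> ball rho (r / c1)" if "z \<in> V n" "gdist (mu n) rho z < \<alpha> n * r" for z
    proof -
      have "\<alpha> n * (c1 * dist rho z) < \<alpha> n * r" using lower'[OF rho_V that(1)] that(2) by simp
      thus ?thesis using \<alpha> c1 by (simp add: field_simps)
    qed
    moreover have "dist x y \<le> \<delta>"
    proof -
      have "\<alpha> n * (c1 * dist x y) \<le> \<alpha> n * (c1 * \<delta>)" using lower'[OF x y] hxy by simp
      thus ?thesis using \<alpha> c1 by simp
    qed
    ultimately show "\<beta> n * \<bar>qG (mu n) (nat \<lfloor>\<gamma> n * t\<rfloor>) rho x
                          - qG (mu n) (nat \<lfloor>\<gamma> n * t\<rfloor>) rho y\<bar> \<le> \<epsilon>"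
      using H x y hx hy t by blast
  qed
qed

lemma nearest_point_eq_self:
  assumes "p \<in> V" "\<forall>y\<in>V. dist x p \<le> dist x y" "x \<in> V"
  shows "p = x"
  using assms by (metis dist_eq_0_iff dist_le_zero_iff)

lemma qG_equicontinuous_if_local_limit:
  fixes F :: "'a::metric_space set"
  assumes LL: "local_limit F q rho mu \<beta> \<gamma> g"
    and compact: "\<And>x r. 0 < r \<Longrightarrow> compact (F \<inter> cball x r)"
    and q_cont: "continuous_on ({0<..} \<times> F) (\<lambda>(t, x). q t x)"
    and \<beta>_nonneg: "\<And>n. 0 \<le> \<beta> n" and VF: "\<And>n. V n \<subseteq> F"
    and g_min: "\<And>n x. g n x \<in> V n \<and> (\<forall>y\<in>V n. dist x (g n x) \<le> dist x y)"
  shows "qG_equicontinuous rho V mu \<beta> \<gamma>"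
  unfolding qG_equicontinuous_def
proof (intro allI impI)
  fix a b r \<epsilon> :: real assume a: "0 < a" and ab: "a \<le> b" and r: "0 < r" and \<epsilon>: "0 < \<epsilon>"
  let ?K = "F \<inter> cball rho r"
  obtain \<eta> where \<eta>: "0 < \<eta>" and U: "\<And>s s' y y'. s \<in> {a..b} \<Longrightarrow> s' \<in> {a..b} \<Longrightarrow> y \<in> ?K \<Longrightarrow>
      y' \<in> ?K \<Longrightarrow> \<bar>s - s'\<bar> < \<eta> \<Longrightarrow> dist y y' < \<eta> \<Longrightarrow> \<bar>q s y - q s' y'\<bar> < \<epsilon> / 3"
    using uniformly_continuous_on_strip[OF q_cont a compact[OF r] inf_le1, where e = "\<epsilon> / 3" and b = b]
      \<epsilon> by auto
  have ev_LL: "eventually (\<lambda>n. \<forall>x\<in>ball rho r \<inter> F. \<forall>t\<in>{a..b}.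
      \<bar>\<beta> n * qG (mu n) (nat \<lfloor>\<gamma> n * t\<rfloor>) rho (g n x) - q t x\<bar> \<le> \<epsilon> / 3) sequentially"
    using LL[unfolded local_limit_def, rule_format, OF a ab r, of "\<epsilon> / 3"] \<epsilon> by simp
  show "\<exists>\<delta>>0. eventually (\<lambda>n. \<forall>x\<in>V n \<inter> ball rho r. \<forall>y\<in>V n \<inter> ball rho r. dist x y \<le> \<delta> \<longrightarrow>
      (\<forall>t\<in>{a..b}. \<beta> n * \<bar>qG (mu n) (nat \<lfloor>\<gamma> n * t\<rfloor>) rho x
                           - qG (mu n) (nat \<lfloor>\<gamma> n * t\<rfloor>) rho y\<bar> \<le> \<epsilon>)) sequentially"
  proof (rule exI[of _ "\<eta> / 2"], intro conjI half_gt_zero \<eta>,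
      rule eventually_mono[OF ev_LL], intro ballI impI)
    fix n x y t assume H: "\<forall>x\<in>ball rho r \<inter> F. \<forall>t\<in>{a..b}.
        \<bar>\<beta> n * qG (mu n) (nat \<lfloor>\<gamma> n * t\<rfloor>) rho (g n x) - q t x\<bar> \<le> \<epsilon> / 3"
      and x: "x \<in> V n \<inter> ball rho r" and y: "y \<in> V n \<inter> ball rho r" and xy: "dist x y \<le> \<eta> / 2"
      and t: "t \<in> {a..b}"
    have "g n z = z" if "z \<in> V n" for z using nearest_point_eq_self g_min that by blast
    hence near: "\<bar>\<beta> n * qG (mu n) (nat \<lfloor>\<gamma> n * t\<rfloor>) rho z - q t z\<bar> \<le> \<epsilon> / 3"
      if "z \<in> V n \<inter> ball rho r" for z
      using H t that VF by force
    have "\<bar>q t x - q t y\<bar> < \<epsilon> / 3" using U[OF t t] x y xy \<eta> VF by force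
    with near[OF x] near[OF y] have "\<bar>\<beta> n * qG (mu n) (nat \<lfloor>\<gamma> n * t\<rfloor>) rho x
                                    - \<beta> n * qG (mu n) (nat \<lfloor>\<gamma> n * t\<rfloor>) rho y\<bar> \<le> \<epsilon>"
      by linarith
    thus "\<beta> n * \<bar>qG (mu n) (nat \<lfloor>\<gamma> n * t\<rfloor>) rho x
                 - qG (mu n) (nat \<lfloor>\<gamma> n * t\<rfloor>) rho y\<bar> \<le> \<epsilon>"
      using \<beta>_nonneg[of n] by (simp add: abs_mult right_diff_distrib[symmetric])
  qed
qed

section \<open>From equicontinuity to the local limit\<close>

lemma eventually_finite_V_ball:
  assumes graphs: "\<And>n. wgraph (V n) (mu n)" and rho_V: "\<And>n. rho \<in> V n"
    and \<alpha>_nonneg: "\<And>n. 0 \<le> \<alpha> n" and r: "0 < r"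
    and upper: "\<exists>c2 n0. \<forall>n\<ge>n0. \<forall>x\<in>V n \<inter> ball rho r. \<forall>y\<in>V n \<inter> ball rho r.
                 gdist (mu n) x y \<le> c2 * \<alpha> n * dist x y + \<alpha>t n"
  shows "eventually (\<lambda>n. finite (V n \<inter> ball rho r)) sequentially"
proof -
  obtain c2 n0 where c2: "\<forall>n\<ge>n0. \<forall>x\<in>V n \<inter> ball rho r. \<forall>y\<in>V n \<inter> ball rho r.
      gdist (mu n) x y \<le> c2 * \<alpha> n * dist x y + \<alpha>t n" using upper by blast
  have "finite (V n \<inter> ball rho r)" if n: "n \<ge> n0" for n
  proof (rule finite_subset[OF _ gdist_ball_finite[OF graphs rho_V]])
    show "V n \<inter> ball rho r \<subseteq> {y \<in> V n. gdist (mu n) rho y \<le> \<bar>c2\<bar> * \<alpha> n * r + \<alpha>t n}"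
    proof
      fix y assume y: "y \<in> V n \<inter> ball rho r"
      have "c2 * \<alpha> n * dist rho y \<le> \<bar>c2\<bar> * \<alpha> n * r"
        using y \<alpha>_nonneg[of n] by (intro mult_mono) (auto intro: mult_right_mono)
      moreover have "gdist (mu n) rho y \<le> c2 * \<alpha> n * dist rho y + \<alpha>t n"
        using c2 n y rho_V[of n] r by simp
      ultimately show "y \<in> {y \<in> V n. gdist (mu n) rho y \<le> \<bar>c2\<bar> * \<alpha> n * r + \<alpha>t n}"
        using y by simp
    qed
  qed
  thus ?thesis by (rule eventually_mono[OF eventually_ge_at_top[of n0]])
qed

lemma tendsto_ball_weight:
  assumes lim: "(\<lambda>n. gmeasure (mu n) (V n) B / ennreal (\<beta> n)) \<longlonglongrightarrow> emeasure nu B"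
    and fin: "eventually (\<lambda>n. finite (B \<inter> V n)) sequentially"
    and \<beta>: "eventually (\<lambda>n. 0 < \<beta> n) sequentially" and nu_B: "emeasure nu B < \<infinity>"
  shows "(\<lambda>n. (\<Sum>y\<in>B \<inter> V n. wdeg (mu n) y) / \<beta> n) \<longlonglongrightarrow> measure nu B"
proof -
  have "eventually (\<lambda>n. gmeasure (mu n) (V n) B / ennreal (\<beta> n)
      = ennreal ((\<Sum>y\<in>B \<inter> V n. wdeg (mu n) y) / \<beta> n)) sequentially"
    using eventually_conj[OF fin \<beta>]
    by (rule eventually_mono) (simp add: gmeasure_eq_sum divide_ennreal sum_nonneg wdeg_nonneg)
  from Lim_transform_eventually[OF lim this]
  have "(\<lambda>n. ennreal ((\<Sum>y\<in>B \<inter> V n. wdeg (mu n) y) / \<beta> n)) \<longlonglongrightarrow> ennreal (measure nu B)"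
    using nu_B by (simp add: emeasure_eq_ennreal_measure)
  moreover have "eventually (\<lambda>n. 0 \<le> (\<Sum>y\<in>B \<inter> V n. wdeg (mu n) y) / \<beta> n) sequentially"
    using \<beta> by (rule eventually_mono) (simp add: sum_nonneg wdeg_nonneg)
  ultimately show ?thesis by (simp add: tendsto_ennreal_iff measure_nonneg)
qed

lemma eventually_net_estimates:
  fixes Z :: "'a::metric_space set"
  assumes Z: "finite Z" "Z \<subseteq> F" and \<delta>: "0 < \<delta>" and a: "0 < a" "a \<le> b"
    and e: "0 < e" "0 < e'"
    and nu_ball: "\<And>z. z \<in> Z \<Longrightarrow> 0 < measure nu (ball z \<delta>)" "\<And>z. emeasure nu (ball z \<delta>) < \<infinity>"
    and fin: "\<And>z. z \<in> Z \<Longrightarrow> eventually (\<lambda>n. finite (ball z \<delta> \<inter> V n)) sequentially"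
    and \<beta>: "eventually (\<lambda>n. 0 < \<beta> n) sequentially"
    and vol: "\<And>x r. x \<in> F \<Longrightarrow> 0 < r \<Longrightarrow>
      (\<lambda>n. gmeasure (mu n) (V n) (ball x r) / ennreal (\<beta> n)) \<longlonglongrightarrow> emeasure nu (ball x r)"
    and walk: "\<And>a b x r \<epsilon>. 0 < a \<Longrightarrow> a \<le> b \<Longrightarrow> x \<in> F \<Longrightarrow> 0 < r \<Longrightarrow> 0 < \<epsilon> \<Longrightarrow>
      eventually (\<lambda>n. \<forall>t\<in>{a..b}. \<bar>walk_prob (mu n) (nat \<lfloor>\<gamma> n * t\<rfloor>) rho (ball x r)
                      - (LINT y:ball x r \<inter> F|nu. q t y)\<bar> \<le> \<epsilon>) sequentially"
  shows "eventually (\<lambda>n. \<forall>z\<in>Z.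
      \<bar>(\<Sum>y\<in>ball z \<delta> \<inter> V n. wdeg (mu n) y) / \<beta> n - measure nu (ball z \<delta>)\<bar>
        \<le> e * measure nu (ball z \<delta>) \<and>
      (\<forall>s\<in>{a..b}. \<bar>walk_prob (mu n) (nat \<lfloor>\<gamma> n * s\<rfloor>) rho (ball z \<delta>)
                      - (LINT y:ball z \<delta> \<inter> F|nu. q s y)\<bar> \<le> e' * measure nu (ball z \<delta>))) sequentially"
proof (rule eventually_ball_finite[OF Z(1)], rule ballI, rule eventually_conj)
  fix z assume z: "z \<in> Z"
  have v: "0 < measure nu (ball z \<delta>)" and zF: "z \<in> F" using nu_ball(1)[OF z] z Z(2) by auto
  have "(\<lambda>n. (\<Sum>y\<in>ball z \<delta> \<inter> V n. wdeg (mu n) y) / \<beta> n) \<longlonglongrightarrow> measure nu (ball z \<delta>)"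
    by (rule tendsto_ball_weight[OF vol[OF zF \<delta>] fin[OF z] \<beta> nu_ball(2)])
  from tendstoD[OF this, of "e * measure nu (ball z \<delta>)"]
  show "eventually (\<lambda>n. \<bar>(\<Sum>y\<in>ball z \<delta> \<inter> V n. wdeg (mu n) y) / \<beta> n - measure nu (ball z \<delta>)\<bar>
      \<le> e * measure nu (ball z \<delta>)) sequentially"
    using e(1) v by (auto simp: dist_real_def elim: eventually_mono)
  show "eventually (\<lambda>n. \<forall>s\<in>{a..b}. \<bar>walk_prob (mu n) (nat \<lfloor>\<gamma> n * s\<rfloor>) rho (ball z \<delta>)
      - (LINT y:ball z \<delta> \<inter> F|nu. q s y)\<bar> \<le> e' * measure nu (ball z \<delta>)) sequentially"
    using walk[OF a zF \<delta>] e(2) v by simp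
qed

lemma set_integral_estimates:
  fixes f g :: "'a \<Rightarrow> real"
  assumes A: "A \<in> sets M" "emeasure M A < \<infinity>"
    and f: "set_integrable M A f" and g: "set_integrable M A g"
    and fg: "\<And>y. y \<in> A \<Longrightarrow> \<bar>f y - g y\<bar> \<le> e" and gc: "\<And>y. y \<in> A \<Longrightarrow> \<bar>g y - c\<bar> \<le> e"
  shows "\<bar>(LINT y:A|M. f y) - (LINT y:A|M. g y)\<bar> \<le> e * measure M A"
    and "\<bar>(LINT y:A|M. g y) - c * measure M A\<bar> \<le> e * measure M A"
proof -
  have c: "set_integrable M A (\<lambda>_. c)" using A by (simp add: set_integrable_def)
  show "\<bar>(LINT y:A|M. f y) - (LINT y:A|M. g y)\<bar> \<le> e * measure M A"
    using set_integral_dist_le[OF f g A(1)] A(2) fg by simp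
  show "\<bar>(LINT y:A|M. g y) - c * measure M A\<bar> \<le> e * measure M A"
    using set_integral_dist_le[OF g c A(1)] A gc set_integral_const[of A M c]
    by (simp add: mult.commute)
qed

lemma set_integrals_approx_on_small_sets:
  fixes q :: "real \<Rightarrow> 'a::metric_space \<Rightarrow> real"
  assumes q_cont: "continuous_on ({0<..} \<times> F) (\<lambda>(t, x). q t x)"
    and q_int: "\<And>t. 0 < t \<Longrightarrow> set_integrable nu F (q t)"
    and a: "0 < a" and K: "compact K" "K \<subseteq> F" and \<epsilon>: "0 < \<epsilon>"
  obtains \<eta> where "0 < \<eta>"
    and "\<And>s s' x B. s \<in> {a..b} \<Longrightarrow> s' \<in> {a..b} \<Longrightarrow> \<bar>s' - s\<bar> < \<eta> \<Longrightarrow> x \<in> K \<Longrightarrow>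
      B \<in> sets nu \<Longrightarrow> emeasure nu B < \<infinity> \<Longrightarrow> B \<subseteq> K \<Longrightarrow> \<forall>y\<in>B. dist y x < \<eta> \<Longrightarrow>
      \<bar>(LINT y:B|nu. q s' y) - (LINT y:B|nu. q s y)\<bar> \<le> \<epsilon> * measure nu B \<and>
      \<bar>(LINT y:B|nu. q s y) - q s x * measure nu B\<bar> \<le> \<epsilon> * measure nu B"
proof -
  obtain \<eta> where \<eta>: "0 < \<eta>" and U: "\<And>s s' y y'. s \<in> {a..b} \<Longrightarrow> s' \<in> {a..b} \<Longrightarrow>
      y \<in> K \<Longrightarrow> y' \<in> K \<Longrightarrow> \<bar>s - s'\<bar> < \<eta> \<Longrightarrow> dist y y' < \<eta> \<Longrightarrow> \<bar>q s y - q s' y'\<bar> < \<epsilon>"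
    using uniformly_continuous_on_strip[OF q_cont a K \<epsilon>] by blast
  show ?thesis
  proof (rule that[OF \<eta>])
    fix s s' x B
    assume s: "s \<in> {a..b}" "s' \<in> {a..b}" "\<bar>s' - s\<bar> < \<eta>" and x: "x \<in> K"
      and B: "B \<in> sets nu" "emeasure nu B < \<infinity>" "B \<subseteq> K" and near: "\<forall>y\<in>B. dist y x < \<eta>"
    have qi: "set_integrable nu B (q u)" if "u \<in> {a..b}" for u
      using set_integrable_subset[OF q_int B(1)] that a B(3) K(2) by auto
    have "\<bar>q s' y - q s y\<bar> \<le> \<epsilon>" "\<bar>q s y - q s x\<bar> \<le> \<epsilon>" if "y \<in> B" for y
      using U[OF s(2,1)] U[OF s(1,1)] s(3) x near that B(3) \<eta>
      by (force simp: abs_minus_commute less_imp_le)+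
    from set_integral_estimates[where f = "q s'" and g = "q s" and c = "q s x",
        OF B(1,2) qi[OF s(2)] qi[OF s(1)] this]
    show "\<bar>(LINT y:B|nu. q s' y) - (LINT y:B|nu. q s y)\<bar> \<le> \<epsilon> * measure nu B \<and>
      \<bar>(LINT y:B|nu. q s y) - q s x * measure nu B\<bar> \<le> \<epsilon> * measure nu B" by blast
  qed
qed

lemma local_limit_if_qG_equicontinuous:
  fixes F :: "'a::metric_space set" and q :: "real \<Rightarrow> 'a \<Rightarrow> real"
  assumes compact: "\<And>x r. 0 < r \<Longrightarrow> compact (F \<inter> cball x r)"
    and nu_radon: "radon_on F nu"
    and nu_full: "\<And>x r. x \<in> F \<Longrightarrow> 0 < r \<Longrightarrow> 0 < emeasure nu (ball x r)"
    and q_cont: "continuous_on ({0<..} \<times> F) (\<lambda>(t, x). q t x)"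
    and q_int: "\<And>t. 0 < t \<Longrightarrow> set_integrable nu F (q t)"
    and graphs: "\<And>n. wgraph (V n) (mu n)" and rho_V: "\<And>n. rho \<in> V n"
    and \<beta>_lim: "filterlim \<beta> at_top sequentially" and \<gamma>_lim: "filterlim \<gamma> at_top sequentially"
    and g_min: "\<And>n x. g n x \<in> V n \<and> (\<forall>y\<in>V n. dist x (g n x) \<le> dist x y)"
    and eq: "qG_equicontinuous rho V mu \<beta> \<gamma>"
    and fin: "\<And>r. 0 < r \<Longrightarrow> eventually (\<lambda>n. finite (V n \<inter> ball rho r)) sequentially"
    and dense: "\<And>r \<epsilon>. 0 < r \<Longrightarrow> 0 < \<epsilon> \<Longrightarrow>
      eventually (\<lambda>n. \<forall>x\<in>ball rho r \<inter> F. infdist x (V n) \<le> \<epsilon>) sequentially"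
    and vol: "\<And>x r. x \<in> F \<Longrightarrow> 0 < r \<Longrightarrow>
      (\<lambda>n. gmeasure (mu n) (V n) (ball x r) / ennreal (\<beta> n)) \<longlonglongrightarrow> emeasure nu (ball x r)"
    and walk: "\<And>a b x r \<epsilon>. 0 < a \<Longrightarrow> a \<le> b \<Longrightarrow> x \<in> F \<Longrightarrow> 0 < r \<Longrightarrow> 0 < \<epsilon> \<Longrightarrow>
      eventually (\<lambda>n. \<forall>t\<in>{a..b}. \<bar>walk_prob (mu n) (nat \<lfloor>\<gamma> n * t\<rfloor>) rho (ball x r)
                      - (LINT y:ball x r \<inter> F|nu. q t y)\<bar> \<le> \<epsilon>) sequentially"
  shows "local_limit F q rho mu \<beta> \<gamma> g"
  unfolding local_limit_def
proof (intro allI impI)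
  fix a b r \<epsilon> :: real assume a: "0 < a" and ab: "a \<le> b" and r: "0 < r" and \<epsilon>: "0 < \<epsilon>"
  let ?K = "F \<inter> cball rho (r + 1)"
  have K: "compact ?K" "?K \<subseteq> F" using compact r by auto
  obtain M where M0: "0 \<le> M" and M: "\<And>s y. s \<in> {a..b+1} \<Longrightarrow> y \<in> ?K \<Longrightarrow> \<bar>q s y\<bar> \<le> M"
    using bounded_on_strip[OF q_cont a K] by blast
  have \<epsilon>8: "0 < \<epsilon> / 8" using \<epsilon> by simp
  obtain \<eta> where \<eta>: "0 < \<eta>" and approx: "\<And>s s' x B. s \<in> {a..b+1} \<Longrightarrow> s' \<in> {a..b+1} \<Longrightarrow>
      \<bar>s' - s\<bar> < \<eta> \<Longrightarrow> x \<in> ?K \<Longrightarrow> B \<in> sets nu \<Longrightarrow> emeasure nu B < \<infinity> \<Longrightarrow> B \<subseteq> ?K \<Longrightarrow>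
      \<forall>y\<in>B. dist y x < \<eta> \<Longrightarrow>
      \<bar>(LINT y:B|nu. q s' y) - (LINT y:B|nu. q s y)\<bar> \<le> \<epsilon> / 8 * measure nu B \<and>
      \<bar>(LINT y:B|nu. q s y) - q s x * measure nu B\<bar> \<le> \<epsilon> / 8 * measure nu B"
    by (rule set_integrals_approx_on_small_sets[OF q_cont q_int a K \<epsilon>8, where b = "b + 1"]) auto
  obtain \<delta>2 where \<delta>2: "0 < \<delta>2" and ev_eq: "eventually (\<lambda>n.
      \<forall>x\<in>V n \<inter> ball rho (r + 2). \<forall>y\<in>V n \<inter> ball rho (r + 2). dist x y \<le> \<delta>2 \<longrightarrow>
        (\<forall>t\<in>{a..b}. \<beta> n * \<bar>qG (mu n) (nat \<lfloor>\<gamma> n * t\<rfloor>) rho x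
                             - qG (mu n) (nat \<lfloor>\<gamma> n * t\<rfloor>) rho y\<bar> \<le> \<epsilon> / 4)) sequentially"
    using eq[unfolded qG_equicontinuous_def, rule_format, OF a ab, of "r + 2" "\<epsilon> / 4"] r \<epsilon> by auto
  define \<delta> where "\<delta> = min (1/2) (min (\<eta> / 3) (\<delta>2 / 3))"
  have \<delta>: "0 < \<delta>" "\<delta> \<le> 1/2" "3 * \<delta> \<le> \<eta>" "3 * \<delta> \<le> \<delta>2" using \<eta> \<delta>2 by (auto simp: \<delta>_def)
  obtain Z where Z: "finite Z" "Z \<subseteq> F \<inter> cball rho r"
    and net: "\<And>x. x \<in> F \<inter> cball rho r \<Longrightarrow> \<exists>z\<in>Z. dist x z < \<delta>"
    using compact_finite_net[OF compact[OF r] \<delta>(1)] by metis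
  define v where "v z = measure nu (ball z \<delta>)" for z
  have ball_finite: "emeasure nu (ball z \<delta>) < \<infinity>" for z
    by (rule radon_on_emeasure_ball_finite[OF nu_radon compact \<delta>(1)])
  have BF: "ball z \<delta> \<inter> F \<in> sets nu" "emeasure nu (ball z \<delta> \<inter> F) < \<infinity>"
    "measure nu (ball z \<delta> \<inter> F) = v z" for z
    unfolding v_def using radon_on_ball_Int[OF nu_radon compact \<delta>(1), of z] by simp_all
  have v_pos: "0 < v z" if "z \<in> Z" for z
    using nu_full[of z \<delta>] that Z \<delta>(1) ball_finite[of z]
    by (auto simp: v_def emeasure_eq_ennreal_measure)
  define e where "e = min (1/2) (\<epsilon> / (16 * (M + 1)))"
  have e: "0 < e" "e \<le> 1/2" "M * e \<le> \<epsilon> / 16"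
  proof -
    show "0 < e" using \<epsilon> M0 by (simp add: e_def)
    show "e \<le> 1/2" unfolding e_def by (rule min.cobounded1)
    have "M * e \<le> M * (\<epsilon> / (16 * (M + 1)))"
      using M0 unfolding e_def by (intro mult_left_mono min.cobounded2)
    also have "\<dots> \<le> \<epsilon> / 16" using M0 \<epsilon> by (simp add: field_simps)
    finally show "M * e \<le> \<epsilon> / 16" .
  qed
  define I where "I s z = (LINT y:ball z \<delta> \<inter> F|nu. q s y)" for s z
  have ball_sub: "ball z \<delta> \<subseteq> ball rho (r + 2)" "ball z \<delta> \<inter> F \<subseteq> ?K" if "z \<in> Z" for z
  proof -
    have "dist rho y < r + \<delta>" if "y \<in> ball z \<delta>" for y
      using dist_triangle[of rho y z] that \<open>z \<in> Z\<close> Z(2) by auto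
    thus "ball z \<delta> \<subseteq> ball rho (r + 2)" "ball z \<delta> \<inter> F \<subseteq> ?K" using \<delta>(2) by fastforce+
  qed
  have ev_fin: "eventually (\<lambda>n. finite (V n \<inter> ball rho (r + 2))) sequentially"
    using fin r by simp
  have ev_\<beta>: "eventually (\<lambda>n. 1 \<le> \<beta> n) sequentially"
    using \<beta>_lim unfolding filterlim_at_top by blast
  have ev_\<beta>0: "eventually (\<lambda>n. 0 < \<beta> n) sequentially"
    using ev_\<beta> by (rule eventually_mono) simp
  have ev_\<gamma>: "eventually (\<lambda>n. max 1 (2 / \<eta>) \<le> \<gamma> n) sequentially"
    using \<gamma>_lim unfolding filterlim_at_top by blast
  have fin_z: "eventually (\<lambda>n. finite (ball z \<delta> \<inter> V n)) sequentially" if "z \<in> Z" for z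
    using ev_fin by (rule eventually_mono) (erule finite_subset[rotated], use ball_sub(1)[OF that] in blast)
  have ev_net: "eventually (\<lambda>n. \<forall>z\<in>Z.
      \<bar>(\<Sum>y\<in>ball z \<delta> \<inter> V n. wdeg (mu n) y) / \<beta> n - v z\<bar> \<le> e * v z \<and>
      (\<forall>s\<in>{a..b+1}. \<bar>walk_prob (mu n) (nat \<lfloor>\<gamma> n * s\<rfloor>) rho (ball z \<delta>) - I s z\<bar> \<le> \<epsilon> / 16 * v z))
      sequentially"
    unfolding v_def I_def
    by (rule eventually_net_estimates[OF Z(1) _ \<delta>(1) a _ e(1) _ v_pos[unfolded v_def] ball_finite
          fin_z ev_\<beta>0 vol walk]) (use Z(2) ab \<epsilon> in auto)
  show "eventually (\<lambda>n. \<forall>x\<in>ball rho r \<inter> F. \<forall>t\<in>{a..b}.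
      \<bar>\<beta> n * qG (mu n) (nat \<lfloor>\<gamma> n * t\<rfloor>) rho (g n x) - q t x\<bar> \<le> \<epsilon>) sequentially"
  proof (rule eventually_mono[OF eventually_conj[OF ev_fin eventually_conj[OF ev_\<beta>
        eventually_conj[OF ev_\<gamma> eventually_conj[OF dense[OF r \<delta>(1)]
        eventually_conj[OF ev_net ev_eq]]]]]], elim conjE, intro ballI)
    fix n x t
    assume fin_n: "finite (V n \<inter> ball rho (r + 2))" and \<beta>1: "1 \<le> \<beta> n"
      and \<gamma>: "max 1 (2 / \<eta>) \<le> \<gamma> n" and dense_n: "\<forall>x\<in>ball rho r \<inter> F. infdist x (V n) \<le> \<delta>"
      and net_n: "\<forall>z\<in>Z. \<bar>(\<Sum>y\<in>ball z \<delta> \<inter> V n. wdeg (mu n) y) / \<beta> n - v z\<bar> \<le> e * v z \<and>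
        (\<forall>s\<in>{a..b+1}. \<bar>walk_prob (mu n) (nat \<lfloor>\<gamma> n * s\<rfloor>) rho (ball z \<delta>) - I s z\<bar> \<le> \<epsilon> / 16 * v z)"
      and eq_n: "\<forall>x\<in>V n \<inter> ball rho (r + 2). \<forall>y\<in>V n \<inter> ball rho (r + 2). dist x y \<le> \<delta>2 \<longrightarrow>
        (\<forall>t\<in>{a..b}. \<beta> n * \<bar>qG (mu n) (nat \<lfloor>\<gamma> n * t\<rfloor>) rho x
                             - qG (mu n) (nat \<lfloor>\<gamma> n * t\<rfloor>) rho y\<bar> \<le> \<epsilon> / 4)"
      and x: "x \<in> ball rho r \<inter> F" and t: "t \<in> {a..b}"
    obtain z where z: "z \<in> Z" and xz: "dist x z < \<delta>" using net x by force
    define m where "m = nat \<lfloor>\<gamma> n * t\<rfloor>"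
    define t' where "t' = t + 1 / \<gamma> n"
      \<comment> \<open>the step m + 1 of the walk is read off (A1d) at time t'\<close>
    have \<gamma>_pos: "0 < \<gamma> n" using \<gamma> by linarith
    have m': "nat \<lfloor>\<gamma> n * t'\<rfloor> = Suc m"
      unfolding t'_def m_def using nat_floor_add_inverse[OF \<gamma>_pos] t a by simp
    have "0 < 1 / \<gamma> n" "1 / \<gamma> n \<le> 1" "1 / \<gamma> n < \<eta>"
      using \<gamma> \<gamma>_pos \<eta> by (auto simp: divide_le_eq field_simps)
    with t a have tt': "t \<in> {a..b+1}" "t' \<in> {a..b+1}" "\<bar>t' - t\<bar> < \<eta>"
      unfolding t'_def by (simp_all, linarith+)
    have gx: "g n x \<in> V n" "dist x (g n x) \<le> \<delta>"
      using g_min[of n x] dist_le_infdist_if_nearest[of "g n x" "V n" x] dense_n x by force+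
    have near_x: "\<forall>y\<in>ball z \<delta> \<inter> F. dist y x < \<eta>"
    proof
      fix y assume "y \<in> ball z \<delta> \<inter> F"
      moreover have "dist x y \<le> dist x z + dist z y" by (rule dist_triangle)
      ultimately show "dist y x < \<eta>" using xz \<delta>(1,3) by (simp add: dist_commute)
    qed
    have B: "ball z \<delta> \<inter> V n \<subseteq> V n \<inter> ball rho (r + 2)" using ball_sub(1)[OF z] by blast
    have "\<bar>\<beta> n * qG (mu n) m rho (g n x) - q t x\<bar> \<le> \<epsilon>"
    proof (rule qG_ball_estimate[OF graphs rho_V finite_subset[OF B fin_n]])
      show "\<beta> n * \<bar>qG (mu n) m rho (g n x) - qG (mu n) m rho y\<bar> \<le> \<epsilon> / 4"
        if "y \<in> ball z \<delta> \<inter> V n" for y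
      proof -
        have "dist (g n x) y \<le> \<delta>2"
          using dist_triangle[of "g n x" y x] dist_triangle[of x y z] gx(2) xz that \<delta>(4)
          by (simp add: dist_commute)
        moreover have "g n x \<in> V n \<inter> ball rho (r + 2)"
          using dist_triangle[of rho "g n x" x] gx x \<delta>(2) by simp
        ultimately show ?thesis using eq_n t that B unfolding m_def by blast
      qed
      have "\<bar>walk_prob (mu n) (nat \<lfloor>\<gamma> n * s\<rfloor>) rho (ball z \<delta>) - I s z\<bar> \<le> \<epsilon> / 16 * v z"
        if "s \<in> {a..b+1}" for s
        using net_n z that by blast
      from this[OF tt'(1)] this[OF tt'(2)]
      show "\<bar>walk_prob (mu n) m rho (ball z \<delta>) - I t z\<bar> \<le> \<epsilon> / 16 * v z"
        "\<bar>walk_prob (mu n) (Suc m) rho (ball z \<delta>) - I t' z\<bar> \<le> \<epsilon> / 16 * v z"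
        unfolding m' m_def .
      have xK: "x \<in> ?K" using x by simp
      from approx[OF tt'(1,2,3) xK BF(1,2) ball_sub(2)[OF z] near_x]
      show "\<bar>I t' z - I t z\<bar> \<le> \<epsilon> / 8 * v z" "\<bar>I t z - q t x * v z\<bar> \<le> \<epsilon> / 8 * v z"
        unfolding I_def BF(3) by blast+
      have "\<bar>q t x\<bar> \<le> M" using M[OF tt'(1)] x by simp
      hence "\<bar>q t x\<bar> * e \<le> M * e" using e(1) by (intro mult_right_mono) auto
      thus "\<bar>q t x\<bar> * e \<le> \<epsilon> / 16" using e(3) by linarith
      show "\<bar>(\<Sum>y\<in>ball z \<delta> \<inter> V n. wdeg (mu n) y) / \<beta> n - v z\<bar> \<le> e * v z"
        using net_n z by blast
    qed (use \<beta>1 e(2) v_pos[OF z] \<epsilon> in simp_all)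
    thus "\<bar>\<beta> n * qG (mu n) (nat \<lfloor>\<gamma> n * t\<rfloor>) rho (g n x) - q t x\<bar> \<le> \<epsilon>"
      unfolding m_def .
  qed
qed

theorem theorem1p1:
  fixes F :: "'a::metric_space set" and rho :: 'a and nu :: "'a measure"
    and q :: "real \<Rightarrow> 'a \<Rightarrow> real"
    and V :: "nat \<Rightarrow> 'a set" and mu :: "nat \<Rightarrow> 'a \<Rightarrow> 'a \<Rightarrow> real"
    and \<alpha> \<beta> \<gamma> :: "nat \<Rightarrow> real" and g :: "nat \<Rightarrow> 'a \<Rightarrow> 'a"
  assumes F_compact: "\<And>x r. 0 < r \<Longrightarrow> compact (F \<inter> cball x r)"
    and rho_F: "rho \<in> F"
    and nu_radon: "radon_on F nu"
    and nu_full: "\<And>x r. x \<in> F \<Longrightarrow> 0 < r \<Longrightarrow> 0 < emeasure nu (ball x r)"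
    and q_cont: "continuous_on ({0<..} \<times> F) (\<lambda>(t, x). q t x)"
    and q_nonneg: "\<And>t x. 0 < t \<Longrightarrow> x \<in> F \<Longrightarrow> 0 \<le> q t x"
    and q_int: "\<And>t. 0 < t \<Longrightarrow> set_integrable nu F (q t)"
    and q_norm: "\<And>t. 0 < t \<Longrightarrow> (LINT y:F|nu. q t y) = 1"
    and graphs: "\<And>n. wgraph (V n) (mu n)"
    and rho_V: "\<And>n. rho \<in> V n"
    and \<alpha>_nonneg: "\<And>n. 0 \<le> \<alpha> n" and \<alpha>_lim: "filterlim \<alpha> at_top sequentially"
    and \<beta>_nonneg: "\<And>n. 0 \<le> \<beta> n" and \<beta>_lim: "filterlim \<beta> at_top sequentially"
    and \<gamma>_nonneg: "\<And>n. 0 \<le> \<gamma> n" and \<gamma>_lim: "filterlim \<gamma> at_top sequentially"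
    and g_min: "\<And>n x. g n x \<in> V n \<and> (\<forall>y\<in>V n. dist x (g n x) \<le> dist x y)"
  shows "(assmA1 F nu q rho V mu \<alpha> \<beta> \<gamma> \<and> assmA2 rho V mu \<alpha> \<beta> \<gamma>
            \<longrightarrow> local_limit F q rho mu \<beta> \<gamma> g)
       \<and> ((\<forall>n. V n \<subseteq> F) \<and> assmA1 F nu q rho V mu \<alpha> \<beta> \<gamma> \<and> local_limit F q rho mu \<beta> \<gamma> g
            \<longrightarrow> assmA2 rho V mu \<alpha> \<beta> \<gamma>)"
proof (intro conjI impI; elim conjE)
  assume A1: "assmA1 F nu q rho V mu \<alpha> \<beta> \<gamma>" and A2: "assmA2 rho V mu \<alpha> \<beta> \<gamma>"
  note A1_parts = A1[unfolded assmA1_def]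
  obtain \<alpha>t where \<alpha>t: "\<alpha>t \<in> o(\<alpha>)" and upper: "\<And>r. 0 < r \<Longrightarrow> \<exists>c2 n0. \<forall>n\<ge>n0.
      \<forall>x\<in>V n \<inter> ball rho r. \<forall>y\<in>V n \<inter> ball rho r. gdist (mu n) x y \<le> c2 * \<alpha> n * dist x y + \<alpha>t n"
    using A1_parts[THEN conjunct2, THEN conjunct1] by (elim exE conjE) blast
  note fin = eventually_finite_V_ball[OF graphs rho_V \<alpha>_nonneg _ upper]
  note equicont = qG_equicontinuous_if_assmA2[OF A2 rho_V \<alpha>_nonneg \<alpha>_lim \<alpha>t upper]
  show "local_limit F q rho mu \<beta> \<gamma> g"
    using local_limit_if_qG_equicontinuous[OF F_compact nu_radon nu_full q_cont q_int graphs rho_V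
          \<beta>_lim \<gamma>_lim g_min equicont fin] A1_parts[THEN conjunct2, THEN conjunct2]
    by blast
next
  assume VF: "\<forall>n. V n \<subseteq> F" and A1: "assmA1 F nu q rho V mu \<alpha> \<beta> \<gamma>"
    and LL: "local_limit F q rho mu \<beta> \<gamma> g"
  obtain c1 where c1: "0 < c1"
    and lower: "\<And>n x y. x \<in> V n \<Longrightarrow> y \<in> V n \<Longrightarrow> c1 * \<alpha> n * dist x y \<le> gdist (mu n) x y"
    using A1[unfolded assmA1_def, THEN conjunct1] by blast
  have "\<And>n. V n \<subseteq> F" using VF by blast
  note equicont = qG_equicontinuous_if_local_limit[OF LL F_compact q_cont \<beta>_nonneg this g_min]
  show "assmA2 rho V mu \<alpha> \<beta> \<gamma>"
    by (rule assmA2_if_qG_equicontinuous[OF equicont rho_V \<alpha>_lim c1 lower])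
qed

end
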